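(* Let $n\geq 2$ and $m\geq 2$ be integers with $mn$ even. Then the total resonance graphs $R_t(C(m-1,n))$ and $R_t(T(m,n))$ are bipartite. Consequently the flip graphs $\mathcal{T}(C(m,n))$ and $\mathcal{T}(T(m,n))$ of the quadriculated cylinder and torus are bipartite.
   Context: The $(m,n)$-quadriculated cylinder $C(m,n)$ is obtained from an $m\times n$ chessboard ($m$ rows each of $n$ unit squares) by identifying its left and right sides; the $(m,n)$-quadriculated torus $T(m,n)$ is obtained by further identifying top and bottom sides. As graphs, $C(k,n)$ denotes the graph formed by the grid points and unit segments of the quadriculated cylinder with $k$ rows of squares: it consists of $k+1$ cycles of length $n$ (a cycle of length $2$ being a pair of parallel edges), consecutive ones joined by a perfect matching of "vertical" edges; it is viewed as embedded in the sphere by capping both ends, so its faces are the $kn$ unit squares and two faces bounded by the two end cycles. $T(m,n)$ as a graph is the grid graph of the quadriculated torus (vertices the $mn$ grid points, edges the unit segments), cellularly embedded in the torus with faces the $mn$ unit squares. The inner dual of the region $C(m,n)$ is the graph $C(m-1,n)$ and the inner dual of $T(m,n)$ is $T(m,n)$. A domino is a union of two adjacent unit squares and a tiling is a set of dominoes with disjoint interiors covering the region; a flip removes two side-by-side parallel dominoes forming a $2\times 2$ block and replaces them by the other two dominoes covering the block. The flip graph $\mathcal{T}(R)$ has the tilings of $R$ as vertices, two being adjacent iff one is obtained from the other by a flip. For a graph $G$ embedded on a surface, the total resonance graph $R_t(G)$ has the perfect matchings of $G$ as vertices, two perfect matchings $M_1,M_2$ being adjacent iff $M_1\oplus M_2$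 is exactly the edge set of the boundary cycle of one face. *)

theory Defs
  imports Main
begin

text \<open>Edges carry an identity (so that parallel edges, e.g. cycles of length 2, are
distinct).  H i j is the horizontal edge leaving grid point (i,j) to the right,
V i j the vertical edge leaving grid point (i,j) upwards.\<close>

datatype gedge = H nat nat | V nat nat

definition perfect_matching ::
  "('v set) \<Rightarrow> ('e set) \<Rightarrow> ('e \<Rightarrow> 'v set) \<Rightarrow> 'e set \<Rightarrow> bool" where
  "perfect_matching Vs E ends M \<longleftrightarrow> M \<subseteq> E \<and> (\<forall>v\<in>Vs. \<exists>!e. e \<in> M \<and> v \<in> ends e)"

definition symdiff :: "'a set \<Rightarrow> 'a set \<Rightarrow> 'a set" where
  "symdiff A B = (A - B) \<union> (B - A)"

text \<open>Adjacency of the total resonance graph; Fs is the set of faces, each given by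
the edge set of its boundary cycle.\<close>
definition total_res_adj ::
  "('v set) \<Rightarrow> ('e set) \<Rightarrow> ('e \<Rightarrow> 'v set) \<Rightarrow> 'e set set \<Rightarrow> 'e set \<Rightarrow> 'e set \<Rightarrow> bool" where
  "total_res_adj Vs E ends Fs M1 M2 \<longleftrightarrow>
     perfect_matching Vs E ends M1 \<and> perfect_matching Vs E ends M2 \<and>
     (\<exists>f\<in>Fs. symdiff M1 M2 = f)"

definition bipartite :: "('a \<Rightarrow> 'a \<Rightarrow> bool) \<Rightarrow> bool" where
  "bipartite R \<longleftrightarrow> (\<exists>c :: 'a \<Rightarrow> bool. \<forall>x y. R x y \<longrightarrow> c x \<noteq> c y)"

text \<open>Domino tilings of a region: Sq is the set of unit squares, Adj the
(side-)adjacency of squares; a domino is the union of two adjacent squares.\<close>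
definition dominoes :: "'s set \<Rightarrow> ('s \<Rightarrow> 's \<Rightarrow> bool) \<Rightarrow> 's set set" where
  "dominoes Sq Adj = {{a, b} | a b. a \<in> Sq \<and> b \<in> Sq \<and> Adj a b}"

definition tiling :: "'s set \<Rightarrow> ('s \<Rightarrow> 's \<Rightarrow> bool) \<Rightarrow> 's set set \<Rightarrow> bool" where
  "tiling Sq Adj T \<longleftrightarrow> T \<subseteq> dominoes Sq Adj \<and> (\<forall>s\<in>Sq. \<exists>!d. d \<in> T \<and> s \<in> d)"

text \<open>Flips: Blocks contains pairs (P,Q) where P and Q are the two ways of covering
a 2x2 block by two parallel dominoes (both orders included).\<close>
definition flip_adj ::
  "'s set \<Rightarrow> ('s \<Rightarrow> 's \<Rightarrow> bool) \<Rightarrow> ('s set set \<times> 's set set) set \<Rightarrow> 's set set \<Rightarrow> 's set set \<Rightarrow> bool" where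
  "flip_adj Sq Adj Blocks T1 T2 \<longleftrightarrow>
     tiling Sq Adj T1 \<and> tiling Sq Adj T2 \<and>
     (\<exists>(P, Q)\<in>Blocks. P \<subseteq> T1 \<and> T2 = (T1 - P) \<union> Q)"

text \<open>Grid points (i,j), 0 \<le> i \<le> k, j \<in> Z_n; k+1 cycles of length n.\<close>
definition cyl_verts :: "nat \<Rightarrow> nat \<Rightarrow> (nat \<times> nat) set" where
  "cyl_verts k n = {(i, j). i \<le> k \<and> j < n}"

definition cyl_edges :: "nat \<Rightarrow> nat \<Rightarrow> gedge set" where
  "cyl_edges k n = {H i j | i j. i \<le> k \<and> j < n} \<union> {V i j | i j. i < k \<and> j < n}"

fun cyl_ends :: "nat \<Rightarrow> gedge \<Rightarrow> (nat \<times> nat) set" where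
  "cyl_ends n (H i j) = {(i, j), (i, (j + 1) mod n)}"
| "cyl_ends n (V i j) = {(i, j), (i + 1, j)}"

text \<open>Faces: the k n unit squares and the two end faces bounded by the end cycles.\<close>
definition cyl_faces :: "nat \<Rightarrow> nat \<Rightarrow> gedge set set" where
  "cyl_faces k n =
     {{H i j, H (i + 1) j, V i j, V i ((j + 1) mod n)} | i j. i < k \<and> j < n}
     \<union> {{H 0 j | j. j < n}, {H k j | j. j < n}}"

definition tor_verts :: "nat \<Rightarrow> nat \<Rightarrow> (nat \<times> nat) set" where
  "tor_verts m n = {(i, j). i < m \<and> j < n}"

definition tor_edges :: "nat \<Rightarrow> nat \<Rightarrow> gedge set" where
  "tor_edges m n = {H i j | i j. i < m \<and> j < n} \<union> {V i j | i j. i < m \<and> j < n}"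

fun tor_ends :: "nat \<Rightarrow> nat \<Rightarrow> gedge \<Rightarrow> (nat \<times> nat) set" where
  "tor_ends m n (H i j) = {(i, j), (i, (j + 1) mod n)}"
| "tor_ends m n (V i j) = {(i, j), ((i + 1) mod m, j)}"

definition tor_faces :: "nat \<Rightarrow> nat \<Rightarrow> gedge set set" where
  "tor_faces m n =
     {{H i j, H ((i + 1) mod m) j, V i j, V i ((j + 1) mod n)} | i j. i < m \<and> j < n}"

section \<open>Regions: quadriculated cylinder and torus (squares indexed by (row, column))\<close>

definition cylR_squares :: "nat \<Rightarrow> nat \<Rightarrow> (nat \<times> nat) set" where
  "cylR_squares m n = {(i, j). i < m \<and> j < n}"

definition cylR_adj :: "nat \<Rightarrow> nat \<Rightarrow> nat \<times> nat \<Rightarrow> nat \<times> nat \<Rightarrow> bool" where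
  "cylR_adj m n a b \<longleftrightarrow>
     (fst a = fst b \<and> (snd b = (snd a + 1) mod n \<or> snd a = (snd b + 1) mod n)) \<or>
     (snd a = snd b \<and> (fst b = fst a + 1 \<or> fst a = fst b + 1))"

definition cylR_blocks :: "nat \<Rightarrow> nat \<Rightarrow> ((nat \<times> nat) set set \<times> (nat \<times> nat) set set) set" where
  "cylR_blocks m n =
     (\<Union>i\<in>{i. i + 1 < m}. \<Union>j\<in>{j. j < n}.
        let j' = (j + 1) mod n;
            P = {{(i, j), (i, j')}, {(i + 1, j), (i + 1, j')}};
            Q = {{(i, j), (i + 1, j)}, {(i, j'), (i + 1, j')}}
        in {(P, Q), (Q, P)})"

definition torR_squares :: "nat \<Rightarrow> nat \<Rightarrow> (nat \<times> nat) set" where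
  "torR_squares m n = {(i, j). i < m \<and> j < n}"

definition torR_adj :: "nat \<Rightarrow> nat \<Rightarrow> nat \<times> nat \<Rightarrow> nat \<times> nat \<Rightarrow> bool" where
  "torR_adj m n a b \<longleftrightarrow>
     (fst a = fst b \<and> (snd b = (snd a + 1) mod n \<or> snd a = (snd b + 1) mod n)) \<or>
     (snd a = snd b \<and> (fst b = (fst a + 1) mod m \<or> fst a = (fst b + 1) mod m))"

definition torR_blocks :: "nat \<Rightarrow> nat \<Rightarrow> ((nat \<times> nat) set set \<times> (nat \<times> nat) set set) set" where
  "torR_blocks m n =
     (\<Union>i\<in>{i. i < m}. \<Union>j\<in>{j. j < n}.
        let i' = (i + 1) mod m; j' = (j + 1) mod n;
            P = {{(i, j), (i, j')}, {(i', j), (i', j')}};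
            Q = {{(i, j), (i', j)}, {(i, j'), (i', j')}}
        in {(P, Q), (Q, P)})"

end

theory Submission
  imports Defs
begin

(* Each of the four graphs is 2-coloured by the parity of the number of elements of a vertex X
   lying in a fixed set S of edges (resonance graphs) or of dominoes (flip graphs). Adjacent
   vertices differ by a face, resp. by the four dominoes of a 2x2 block, so it suffices that S
   meets every face, resp. block, in an odd number of elements. Horizontal edges and dominoes in
   even rows do this for the squares of the cylinder; on the torus they need m even, and
   otherwise n is even and vertical edges and dominoes in even columns work. The two end faces
   of the cylinder graph are n-cycles: for n odd they are never the symmetric difference of two
   perfect matchings, and for n even the vertical edges in even columns together with the
   horizontal edges of column 0 meet both end faces once and every square once or three times. *)

lemma Suc_mod_neq_self:
  fixes j n :: nat
  assumes "n \<ge> 2"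
  shows "(j + 1) mod n \<noteq> j"
proof (cases "j + 1 < n")
  case False
  then consider "j + 1 = n" | "n \<le> j" by linarith
  then show ?thesis using assms
    by cases (simp, metis mod_less_divisor not_le order.strict_trans1 zero_less_numeral)
qed simp

lemma even_Suc_mod_iff:
  fixes j n :: nat
  assumes "even n"
  shows "even ((j + 1) mod n) \<longleftrightarrow> odd j"
  using dvd_mod_iff[OF assms, of "j + 1"] by simp

lemma card_Int_symdiff_parity:
  assumes "finite A" "finite B"
  shows "even (card (A \<inter> S) + card (B \<inter> S)) \<longleftrightarrow> even (card (symdiff A B \<inter> S))"
proof -
  let ?A = "A \<inter> S" and ?B = "B \<inter> S"
  have "card ?A + card ?B = card (?A \<union> ?B) + card (?A \<inter> ?B)"
    using assms by (intro card_Un_Int) auto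
  also have "?A \<union> ?B = (symdiff A B \<inter> S) \<union> (?A \<inter> ?B)"
    by (auto simp: symdiff_def)
  also have "card \<dots> = card (symdiff A B \<inter> S) + card (?A \<inter> ?B)"
    by (rule card_Un_disjoint) (use assms in \<open>auto simp: symdiff_def\<close>)
  finally have "card ?A + card ?B = card (symdiff A B \<inter> S) + 2 * card (?A \<inter> ?B)"
    by simp
  then show ?thesis by simp
qed

lemma bipartite_by_parity_of_symdiff:
  fixes R :: "'a set \<Rightarrow> 'a set \<Rightarrow> bool"
  assumes "\<And>A B. R A B \<Longrightarrow> finite A \<and> finite B \<and> odd (card (symdiff A B \<inter> S))"
  shows "bipartite R"
  unfolding bipartite_def
proof (intro exI[of _ "\<lambda>A. even (card (A \<inter> S))"] allI impI)
  fix A B assume "R A B"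
  then have "finite A" "finite B" "odd (card (symdiff A B \<inter> S))" using assms by blast+
  then show "even (card (A \<inter> S)) \<noteq> even (card (B \<inter> S))"
    using card_Int_symdiff_parity[of A B S] by auto
qed

lemma perfect_matching_finite:
  "perfect_matching Vs E ends M \<Longrightarrow> finite E \<Longrightarrow> finite M"
  unfolding perfect_matching_def using finite_subset by blast

lemma bipartite_total_res_adj:
  assumes "finite E"
    and "\<And>M1 M2. perfect_matching Vs E ends M1 \<Longrightarrow> perfect_matching Vs E ends M2 \<Longrightarrow>
           symdiff M1 M2 \<in> Fs \<Longrightarrow> odd (card (symdiff M1 M2 \<inter> S))"
  shows "bipartite (total_res_adj Vs E ends Fs)"
proof (rule bipartite_by_parity_of_symdiff[where S = S])
  fix M1 M2 assume "total_res_adj Vs E ends Fs M1 M2"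
  then show "finite M1 \<and> finite M2 \<and> odd (card (symdiff M1 M2 \<inter> S))"
    unfolding total_res_adj_def using assms perfect_matching_finite by blast
qed

lemma symdiff_perfect_matchings_alternate:
  assumes "perfect_matching Vs E ends M1" "perfect_matching Vs E ends M2"
    and "e \<in> symdiff M1 M2" "e' \<in> symdiff M1 M2" "e' \<noteq> e"
    and "v \<in> Vs" "v \<in> ends e" "v \<in> ends e'"
  shows "e' \<in> M1 \<longleftrightarrow> e \<notin> M1"
proof -
  have "\<And>a b. a \<in> M1 \<Longrightarrow> b \<in> M1 \<Longrightarrow> v \<in> ends a \<Longrightarrow> v \<in> ends b \<Longrightarrow> a = b"
    and "\<And>a b. a \<in> M2 \<Longrightarrow> b \<in> M2 \<Longrightarrow> v \<in> ends a \<Longrightarrow> v \<in> ends b \<Longrightarrow> a = b"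
    using assms(1,2,6) unfolding perfect_matching_def by metis+
  then show ?thesis using assms(3-5,7,8) unfolding symdiff_def by blast
qed

lemma symdiff_perfect_matchings_no_odd_cycle:
  fixes n :: nat and e :: "nat \<Rightarrow> 'e"
  assumes pm1: "perfect_matching Vs E ends M1" and pm2: "perfect_matching Vs E ends M2"
    and "odd n"
    and in_symdiff: "\<And>j. j < n \<Longrightarrow> e j \<in> symdiff M1 M2"
    and distinct: "\<And>j. j < n \<Longrightarrow> e ((j + 1) mod n) \<noteq> e j"
    and shared: "\<And>j. j < n \<Longrightarrow> \<exists>v\<in>Vs. v \<in> ends (e j) \<and> v \<in> ends (e ((j + 1) mod n))"
  shows False
proof -
  have alternate: "e ((j + 1) mod n) \<in> M1 \<longleftrightarrow> e j \<notin> M1" if "j < n" for j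
  proof -
    have "(j + 1) mod n < n" using that by simp
    then show ?thesis
      using shared[OF that] symdiff_perfect_matchings_alternate[OF pm1 pm2 in_symdiff[OF that]
          in_symdiff distinct[OF that]] by blast
  qed
  have parity: "e j \<in> M1 \<longleftrightarrow> (e 0 \<in> M1 \<longleftrightarrow> even j)" if "j < n" for j
    using that
  proof (induction j)
    case (Suc j)
    then have "(j + 1) mod n = Suc j" by simp
    then show ?case using alternate[of j] Suc by simp
  qed simp
  obtain k where "n = 2 * k + 1" using \<open>odd n\<close> by (rule oddE)
  then show False using alternate[of "2 * k"] parity[of "2 * k"] by simp
qed

definition horizontal_even_rows :: "gedge set" where
  "horizontal_even_rows = {H i j | i j. even i}"

definition vertical_even_columns :: "gedge set" where
  "vertical_even_columns = {V i j | i j. even j}"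

definition horizontal_column_zero :: "gedge set" where
  "horizontal_column_zero = range (\<lambda>i. H i 0)"

lemma card_square_Int_horizontal_even_rows:
  assumes "even i \<noteq> even i'"
  shows "card ({H i j, H i' j, V i j, V i j'} \<inter> horizontal_even_rows) = 1"
proof -
  have "{H i j, H i' j, V i j, V i j'} \<inter> horizontal_even_rows
      = (if even i then {H i j} else {H i' j})"
    using assms by (auto simp: horizontal_even_rows_def)
  then show ?thesis by simp
qed

lemma card_square_Int_vertical_even_columns:
  assumes "even j \<noteq> even j'"
  shows "card ({H i j, H i' j, V i j, V i j'} \<inter> vertical_even_columns) = 1"
proof -
  have "{H i j, H i' j, V i j, V i j'} \<inter> vertical_even_columns
      = (if even j then {V i j} else {V i j'})"
    using assms by (auto simp: vertical_even_columns_def)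
  then show ?thesis by simp
qed

lemma odd_card_square_Int_even_columns_and_column_zero:
  assumes "i \<noteq> i'" "even j \<noteq> even j'"
  shows "odd (card ({H i j, H i' j, V i j, V i j'}
                     \<inter> (vertical_even_columns \<union> horizontal_column_zero)))"
proof -
  let ?f = "{H i j, H i' j, V i j, V i j'}"
  have vertical: "card (?f \<inter> vertical_even_columns) = 1"
    by (rule card_square_Int_vertical_even_columns[OF assms(2)])
  show ?thesis
  proof (cases "j = 0")
    case True
    then have "?f \<inter> (vertical_even_columns \<union> horizontal_column_zero)
        = (?f \<inter> vertical_even_columns) \<union> {H i 0, H i' 0}"
      "?f \<inter> vertical_even_columns \<inter> {H i 0, H i' 0} = {}"
      by (auto simp: vertical_even_columns_def horizontal_column_zero_def)
    then show ?thesis using vertical assms(1) by (simp add: card_Un_disjoint)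
  next
    case False
    then have "?f \<inter> (vertical_even_columns \<union> horizontal_column_zero)
        = ?f \<inter> vertical_even_columns"
      by (auto simp: horizontal_column_zero_def)
    then show ?thesis using vertical by simp
  qed
qed

lemma cyl_facesE:
  assumes "f \<in> cyl_faces k n"
  obtains (square) i j where "j < n" "f = {H i j, H (i + 1) j, V i j, V i ((j + 1) mod n)}"
    | (boundary) r where "r \<le> k" "f = {H r j | j. j < n}"
  using assms unfolding cyl_faces_def by blast

lemma cyl_boundary_not_symdiff_if_odd:
  assumes "n \<ge> 2" "odd n" "r \<le> k"
    and "perfect_matching (cyl_verts k n) (cyl_edges k n) (cyl_ends n) M1"
    and "perfect_matching (cyl_verts k n) (cyl_edges k n) (cyl_ends n) M2"
  shows "symdiff M1 M2 \<noteq> {H r j | j. j < n}"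
proof
  assume boundary: "symdiff M1 M2 = {H r j | j. j < n}"
  show False
  proof (rule symdiff_perfect_matchings_no_odd_cycle[OF assms(4,5) \<open>odd n\<close>, where e = "H r"])
    fix j assume "j < n"
    then show "H r j \<in> symdiff M1 M2" using boundary by blast
    show "H r ((j + 1) mod n) \<noteq> H r j" using Suc_mod_neq_self[OF assms(1)] by simp
    have "(r, (j + 1) mod n) \<in> cyl_verts k n" using \<open>j < n\<close> assms(3) by (simp add: cyl_verts_def)
    then show "\<exists>v\<in>cyl_verts k n. v \<in> cyl_ends n (H r j) \<and> v \<in> cyl_ends n (H r ((j + 1) mod n))"
      by auto
  qed
qed

lemma finite_cyl_edges: "finite (cyl_edges k n)"
proof -
  have "cyl_edges k n = case_prod H ` ({..k} \<times> {..<n}) \<union> case_prod V ` ({..<k} \<times> {..<n})"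
    unfolding cyl_edges_def by auto
  then show ?thesis by simp
qed

lemma finite_tor_edges: "finite (tor_edges m n)"
proof -
  have "tor_edges m n = case_prod H ` ({..<m} \<times> {..<n}) \<union> case_prod V ` ({..<m} \<times> {..<n})"
    unfolding tor_edges_def by auto
  then show ?thesis by simp
qed

lemma bipartite_total_res_adj_cyl:
  assumes "n \<ge> 2"
  shows "bipartite (total_res_adj (cyl_verts k n) (cyl_edges k n) (cyl_ends n) (cyl_faces k n))"
proof (cases "even n")
  case True
  show ?thesis
  proof (rule bipartite_total_res_adj[OF finite_cyl_edges,
        where S = "vertical_even_columns \<union> horizontal_column_zero"])
    fix M1 M2 assume "symdiff M1 M2 \<in> cyl_faces k n"
    then show "odd (card (symdiff M1 M2 \<inter> (vertical_even_columns \<union> horizontal_column_zero)))"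
    proof (cases rule: cyl_facesE)
      case (square i j)
      then show ?thesis
        using odd_card_square_Int_even_columns_and_column_zero even_Suc_mod_iff[OF True] by simp
    next
      case (boundary r)
      moreover have "{H r j | j. j < n} \<inter> (vertical_even_columns \<union> horizontal_column_zero)
          = {H r 0}"
        using assms by (auto simp: vertical_even_columns_def horizontal_column_zero_def)
      ultimately show ?thesis by simp
    qed
  qed
next
  case False
  show ?thesis
  proof (rule bipartite_total_res_adj[OF finite_cyl_edges, where S = horizontal_even_rows])
    fix M1 M2
    assume matchings: "perfect_matching (cyl_verts k n) (cyl_edges k n) (cyl_ends n) M1"
        "perfect_matching (cyl_verts k n) (cyl_edges k n) (cyl_ends n) M2"
      and face: "symdiff M1 M2 \<in> cyl_faces k n"
    from face show "odd (card (symdiff M1 M2 \<inter> horizontal_even_rows))"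
    proof (cases rule: cyl_facesE)
      case (square i j)
      then show ?thesis using card_square_Int_horizontal_even_rows by simp
    next
      case (boundary r)
      then show ?thesis using cyl_boundary_not_symdiff_if_odd[OF assms False _ matchings] by blast
    qed
  qed
qed

lemma bipartite_total_res_adj_tor:
  assumes "even (m * n)"
  shows "bipartite (total_res_adj (tor_verts m n) (tor_edges m n) (tor_ends m n) (tor_faces m n))"
proof -
  define S where "S = (if even m then horizontal_even_rows else vertical_even_columns)"
  have "odd (card ({H i j, H ((i + 1) mod m) j, V i j, V i ((j + 1) mod n)} \<inter> S))" for i j
  proof (cases "even m")
    case True
    then show ?thesis
      using card_square_Int_horizontal_even_rows even_Suc_mod_iff[OF True] by (simp add: S_def)
  next
    case False
    then have "even n" using assms by simp
    then show ?thesis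
      using False card_square_Int_vertical_even_columns even_Suc_mod_iff by (simp add: S_def)
  qed
  then show ?thesis
    by (intro bipartite_total_res_adj[OF finite_tor_edges, where S = S]) (auto simp: tor_faces_def)
qed

lemma tiling_finite:
  assumes "finite Sq" "tiling Sq Adj T"
  shows "finite T"
proof -
  have "T \<subseteq> Pow Sq" using assms(2) unfolding tiling_def dominoes_def by auto
  then show ?thesis using assms(1) by (simp add: finite_subset)
qed

lemma bipartite_flip_adj:
  assumes "finite Sq"
    and "\<And>P Q T. (P, Q) \<in> Blocks \<Longrightarrow> tiling Sq Adj T \<Longrightarrow> P \<subseteq> T \<Longrightarrow>
           Q \<inter> T = {} \<and> odd (card ((P \<union> Q) \<inter> S))"
  shows "bipartite (flip_adj Sq Adj Blocks)"
proof (rule bipartite_by_parity_of_symdiff[where S = S])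
  fix T1 T2 assume "flip_adj Sq Adj Blocks T1 T2"
  then obtain P Q where tilings: "tiling Sq Adj T1" "tiling Sq Adj T2"
    and block: "(P, Q) \<in> Blocks" "P \<subseteq> T1" and flip: "T2 = (T1 - P) \<union> Q"
    unfolding flip_adj_def by blast
  with assms(2) have "Q \<inter> T1 = {}" "odd (card ((P \<union> Q) \<inter> S))" by blast+
  moreover have "symdiff T1 T2 = P \<union> Q"
    using flip block(2) \<open>Q \<inter> T1 = {}\<close> by (auto simp: symdiff_def)
  ultimately show "finite T1 \<and> finite T2 \<and> odd (card (symdiff T1 T2 \<inter> S))"
    using tiling_finite[OF assms(1)] tilings by simp
qed

abbreviation horizontal_pair :: "nat \<Rightarrow> nat \<Rightarrow> nat \<Rightarrow> nat \<Rightarrow> (nat \<times> nat) set set" where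
  "horizontal_pair i i' j j' \<equiv> {{(i, j), (i, j')}, {(i', j), (i', j')}}"

abbreviation vertical_pair :: "nat \<Rightarrow> nat \<Rightarrow> nat \<Rightarrow> nat \<Rightarrow> (nat \<times> nat) set set" where
  "vertical_pair i i' j j' \<equiv> {{(i, j), (i', j)}, {(i, j'), (i', j')}}"

lemma tiling_disjoint_if_overlapping:
  assumes "tiling Sq Adj T" "p \<in> T" "\<And>q. q \<in> Q \<Longrightarrow> q \<noteq> p \<and> p \<inter> q \<inter> Sq \<noteq> {}"
  shows "Q \<inter> T = {}"
  using assms unfolding tiling_def by blast

lemma tiling_block_disjoint:
  assumes "tiling Sq Adj T" "i \<noteq> i'" "j \<noteq> j'" "(i, j) \<in> Sq" "(i, j') \<in> Sq" "(i', j) \<in> Sq"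
    and "(P, Q) = (horizontal_pair i i' j j', vertical_pair i i' j j')
       \<or> (P, Q) = (vertical_pair i i' j j', horizontal_pair i i' j j')"
    and "P \<subseteq> T"
  shows "Q \<inter> T = {}"
  using assms(7)
proof
  assume "(P, Q) = (horizontal_pair i i' j j', vertical_pair i i' j j')"
  then show ?thesis
    using assms(2-6,8)
    by (intro tiling_disjoint_if_overlapping[OF assms(1), of "{(i, j), (i, j')}"]) auto
next
  assume "(P, Q) = (vertical_pair i i' j j', horizontal_pair i i' j j')"
  then show ?thesis
    using assms(2-6,8)
    by (intro tiling_disjoint_if_overlapping[OF assms(1), of "{(i, j), (i', j)}"]) auto
qed

definition within_even_row :: "(nat \<times> nat) set set" where
  "within_even_row = {d. \<exists>i. even i \<and> (\<forall>x\<in>d. fst x = i)}"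

definition within_even_column :: "(nat \<times> nat) set set" where
  "within_even_column = {d. \<exists>j. even j \<and> (\<forall>x\<in>d. snd x = j)}"

lemma doubleton_within_even_row_iff:
  "{(a, b), (c, d)} \<in> within_even_row \<longleftrightarrow> a = c \<and> even a"
  by (auto simp: within_even_row_def)

lemma doubleton_within_even_column_iff:
  "{(a, b), (c, d)} \<in> within_even_column \<longleftrightarrow> b = d \<and> even b"
  by (auto simp: within_even_column_def)

lemma card_block_Int_within_even_row:
  assumes "even i \<noteq> even i'"
  shows "card ((horizontal_pair i i' j j' \<union> vertical_pair i i' j j') \<inter> within_even_row) = 1"
proof -
  have "(horizontal_pair i i' j j' \<union> vertical_pair i i' j j') \<inter> within_even_row
      = (if even i then {{(i, j), (i, j')}} else {{(i', j), (i', j')}})"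
    using assms by (auto simp: doubleton_within_even_row_iff)
  then show ?thesis by simp
qed

lemma card_block_Int_within_even_column:
  assumes "even j \<noteq> even j'"
  shows "card ((horizontal_pair i i' j j' \<union> vertical_pair i i' j j') \<inter> within_even_column) = 1"
proof -
  have "(horizontal_pair i i' j j' \<union> vertical_pair i i' j j') \<inter> within_even_column
      = (if even j then {{(i, j), (i', j)}} else {{(i, j'), (i', j')}})"
    using assms by (auto simp: doubleton_within_even_column_iff)
  then show ?thesis by simp
qed

lemma bipartite_flip_adj_cylR:
  assumes "n \<ge> 2"
  shows "bipartite (flip_adj (cylR_squares m n) (cylR_adj m n) (cylR_blocks m n))"
proof (rule bipartite_flip_adj[where S = within_even_row])
  show "finite (cylR_squares m n)"
    by (rule finite_subset[of _ "{..<m} \<times> {..<n}"]) (auto simp: cylR_squares_def)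
next
  fix P Q T
  assume block: "(P, Q) \<in> cylR_blocks m n" and tiling: "tiling (cylR_squares m n) (cylR_adj m n) T"
    and "P \<subseteq> T"
  from block obtain i j where "i + 1 < m" "j < n"
    and pairs: "(P, Q) = (horizontal_pair i (i + 1) j ((j + 1) mod n),
                          vertical_pair i (i + 1) j ((j + 1) mod n))
             \<or> (P, Q) = (vertical_pair i (i + 1) j ((j + 1) mod n),
                          horizontal_pair i (i + 1) j ((j + 1) mod n))"
    unfolding cylR_blocks_def Let_def by blast
  have "Q \<inter> T = {}"
    by (rule tiling_block_disjoint[OF tiling _ _ _ _ _ pairs \<open>P \<subseteq> T\<close>])
      (use \<open>i + 1 < m\<close> \<open>j < n\<close> Suc_mod_neq_self[OF assms, of j] in \<open>auto simp: cylR_squares_def\<close>)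
  moreover have "P \<union> Q = horizontal_pair i (i + 1) j ((j + 1) mod n)
                        \<union> vertical_pair i (i + 1) j ((j + 1) mod n)"
    using pairs by auto
  moreover have "card ((horizontal_pair i (i + 1) j ((j + 1) mod n)
      \<union> vertical_pair i (i + 1) j ((j + 1) mod n)) \<inter> within_even_row) = 1"
    by (rule card_block_Int_within_even_row) simp
  ultimately show "Q \<inter> T = {} \<and> odd (card ((P \<union> Q) \<inter> within_even_row))"
    by simp
qed

lemma bipartite_flip_adj_torR:
  assumes "n \<ge> 2" "m \<ge> 2" "even (m * n)"
  shows "bipartite (flip_adj (torR_squares m n) (torR_adj m n) (torR_blocks m n))"
proof -
  define S where "S = (if even m then within_even_row else within_even_column)"
  have card_block: "card ((horizontal_pair i ((i + 1) mod m) j ((j + 1) mod n)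
      \<union> vertical_pair i ((i + 1) mod m) j ((j + 1) mod n)) \<inter> S) = 1" for i j
  proof (cases "even m")
    case True
    then show ?thesis
      using card_block_Int_within_even_row even_Suc_mod_iff[OF True] by (simp add: S_def)
  next
    case False
    then have "even n" using assms(3) by simp
    then show ?thesis
      using False card_block_Int_within_even_column even_Suc_mod_iff by (simp add: S_def)
  qed
  show ?thesis
  proof (rule bipartite_flip_adj[where S = S])
    show "finite (torR_squares m n)"
      by (rule finite_subset[of _ "{..<m} \<times> {..<n}"]) (auto simp: torR_squares_def)
  next
    fix P Q T
    assume block: "(P, Q) \<in> torR_blocks m n" and tiling: "tiling (torR_squares m n) (torR_adj m n) T"
      and "P \<subseteq> T"
    from block obtain i j where "i < m" "j < n"
      and pairs: "(P, Q) = (horizontal_pair i ((i + 1) mod m) j ((j + 1) mod n),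
                            vertical_pair i ((i + 1) mod m) j ((j + 1) mod n))
               \<or> (P, Q) = (vertical_pair i ((i + 1) mod m) j ((j + 1) mod n),
                            horizontal_pair i ((i + 1) mod m) j ((j + 1) mod n))"
      unfolding torR_blocks_def Let_def by blast
    have "Q \<inter> T = {}"
      by (rule tiling_block_disjoint[OF tiling _ _ _ _ _ pairs \<open>P \<subseteq> T\<close>])
        (use \<open>i < m\<close> \<open>j < n\<close> Suc_mod_neq_self[OF assms(2), of i] Suc_mod_neq_self[OF assms(1), of j]
          in \<open>auto simp: torR_squares_def\<close>)
    moreover have "P \<union> Q = horizontal_pair i ((i + 1) mod m) j ((j + 1) mod n)
                          \<union> vertical_pair i ((i + 1) mod m) j ((j + 1) mod n)"
      using pairs by auto
    ultimately show "Q \<inter> T = {} \<and> odd (card ((P \<union> Q) \<inter> S))"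
      using card_block by simp
  qed
qed

theorem corollary2p7:
  fixes m n :: nat
  assumes "n \<ge> 2" and "m \<ge> 2" and "even (m * n)"
  shows "bipartite (total_res_adj (cyl_verts (m - 1) n) (cyl_edges (m - 1) n) (cyl_ends n)
                      (cyl_faces (m - 1) n))
       \<and> bipartite (total_res_adj (tor_verts m n) (tor_edges m n) (tor_ends m n) (tor_faces m n))
       \<and> bipartite (flip_adj (cylR_squares m n) (cylR_adj m n) (cylR_blocks m n))
       \<and> bipartite (flip_adj (torR_squares m n) (torR_adj m n) (torR_blocks m n))"
  using bipartite_total_res_adj_cyl[OF assms(1)] bipartite_total_res_adj_tor[OF assms(3)]
    bipartite_flip_adj_cylR[OF assms(1)] bipartite_flip_adj_torR[OF assms]
  by blast

end
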